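(* Let $S=\{0,1,\dots,p-1\}$ with $p\ge 2$, let $m\ge 2$, and let $f:S^m\to S$ be a local rule. If there exists a pair of replaceable local configurations for $f$, then there exists a pair of periodic local configurations for $f$.
   Context: A local configuration is a finite word over $S$. For a word $w=w_1w_2\cdots w_n$ with $n\ge m$, its successor under $f$ is the word $\hat f(w)=u_1\cdots u_{n-m+1}$ with $u_j=f(w_j,w_{j+1},\dots,w_{j+m-1})$. For $k\le n$, $\mathrm{left}_k(w)=w_1\cdots w_k$ and $\mathrm{right}_k(w)=w_{n-k+1}\cdots w_n$. Two local configurations $\alpha,\beta$ of the same length $n$ are replaceable if: $n\ge 2m-1$; $\alpha\ne\beta$; $\mathrm{left}_{m-1}(\alpha)=\mathrm{left}_{m-1}(\beta)$; $\mathrm{right}_{m-1}(\alpha)=\mathrm{right}_{m-1}(\beta)$; and $\hat f(\alpha)=\hat f(\beta)$. They are periodic if: $n\ge m$; $\alpha\ne\beta$; $\mathrm{left}_{m-1}(\alpha)=\mathrm{right}_{m-1}(\alpha)$; $\mathrm{left}_{m-1}(\beta)=\mathrm{right}_{m-1}(\beta)$; and $\hat f(\alpha)=\hat f(\beta)$. *)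

theory Defs
  imports Main
begin

text \<open>Alphabet S = {0..<p}; local configurations are finite words (lists) over S.
  A local rule f : S^m -> S is modelled as a function on lists, only its values on
  length-m words over S matter.\<close>

definition is_word :: "nat \<Rightarrow> nat list \<Rightarrow> bool" where
  "is_word p w \<longleftrightarrow> (\<forall>x \<in> set w. x < p)"

definition local_rule :: "nat \<Rightarrow> nat \<Rightarrow> (nat list \<Rightarrow> nat) \<Rightarrow> bool" where
  "local_rule p m f \<longleftrightarrow> (\<forall>w. length w = m \<longrightarrow> is_word p w \<longrightarrow> f w < p)"

text \<open>Successor: u_j = f(w_j ... w_{j+m-1}) for j = 1..n-m+1 (assumes n >= m).\<close>
definition succ :: "nat \<Rightarrow> (nat list \<Rightarrow> nat) \<Rightarrow> nat list \<Rightarrow> nat list" where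
  "succ m f w = map (\<lambda>j. f (take m (drop j w))) [0..<length w - m + 1]"

definition left_k :: "nat \<Rightarrow> nat list \<Rightarrow> nat list" where
  "left_k k w = take k w"

definition right_k :: "nat \<Rightarrow> nat list \<Rightarrow> nat list" where
  "right_k k w = drop (length w - k) w"

definition replaceable :: "nat \<Rightarrow> nat \<Rightarrow> (nat list \<Rightarrow> nat) \<Rightarrow> nat list \<Rightarrow> nat list \<Rightarrow> bool" where
  "replaceable p m f \<alpha> \<beta> \<longleftrightarrow>
     is_word p \<alpha> \<and> is_word p \<beta> \<and> length \<alpha> = length \<beta> \<and>
     length \<alpha> \<ge> 2 * m - 1 \<and> \<alpha> \<noteq> \<beta> \<and>
     left_k (m - 1) \<alpha> = left_k (m - 1) \<beta> \<and>
     right_k (m - 1) \<alpha> = right_k (m - 1) \<beta> \<and>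
     succ m f \<alpha> = succ m f \<beta>"

definition periodic :: "nat \<Rightarrow> nat \<Rightarrow> (nat list \<Rightarrow> nat) \<Rightarrow> nat list \<Rightarrow> nat list \<Rightarrow> bool" where
  "periodic p m f \<alpha> \<beta> \<longleftrightarrow>
     is_word p \<alpha> \<and> is_word p \<beta> \<and> length \<alpha> = length \<beta> \<and>
     length \<alpha> \<ge> m \<and> \<alpha> \<noteq> \<beta> \<and>
     left_k (m - 1) \<alpha> = right_k (m - 1) \<alpha> \<and>
     left_k (m - 1) \<beta> = right_k (m - 1) \<beta> \<and>
     succ m f \<alpha> = succ m f \<beta>"

end

theory Submission
  imports Defs
begin

text \<open>Close the replaceable pair up by appending their common left border.
  Every new window either lies inside the old words, where the successors already
  agree, or starts inside the common right border, where the two words coincide;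
  so the successors still agree, and both words now begin and end with the same
  border.\<close>

lemma drop_eq_if_right_k_eq:
  assumes "length a = length b" and "right_k k a = right_k k b"
    and "length a - k \<le> j"
  shows "drop j a = drop j b"
proof -
  have "drop j a = drop (j - (length a - k)) (right_k k a)"
    using assms(3) by (simp add: right_k_def)
  also have "\<dots> = drop (j - (length b - k)) (right_k k b)"
    using assms(1,2) by simp
  also have "\<dots> = drop j b"
    using assms by (simp add: right_k_def)
  finally show ?thesis .
qed

lemma succ_append_eq:
  assumes len: "length a = length b"
    and right: "right_k (m - 1) a = right_k (m - 1) b"
    and succ: "succ m f a = succ m f b"
  shows "succ m f (a @ w) = succ m f (b @ w)"
proof -
  have "f (take m (drop j (a @ w))) = f (take m (drop j (b @ w)))" for j
  proof (cases "j + m \<le> length a")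
    case True
    then have "j < length a - m + 1" by simp
    then have "f (take m (drop j a)) = f (take m (drop j b))"
      using arg_cong[OF succ, of "\<lambda>u. u ! j"] len
      by (simp add: succ_def del: upt_Suc)
    then show ?thesis
      using True len by simp
  next
    case False
    then have "drop j a = drop j b"
      using drop_eq_if_right_k_eq[OF len right] by simp
    then show ?thesis
      using len by simp
  qed
  then show ?thesis
    using len by (simp add: succ_def)
qed

lemma left_k_eq_right_k_append_left_k:
  assumes "k \<le> length w"
  shows "left_k k (w @ left_k k w) = right_k k (w @ left_k k w)"
  using assms by (simp add: left_k_def right_k_def)

lemma is_word_append_left_k:
  "is_word p a \<Longrightarrow> is_word p b \<Longrightarrow> is_word p (a @ left_k k b)"
  by (auto simp: is_word_def left_k_def dest: in_set_takeD)

text \<open>Neither the size of the alphabet nor the values of f are used: the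
  construction only rearranges the given words.\<close>

theorem lemma5:
  fixes p m :: nat and f :: "nat list \<Rightarrow> nat"
  assumes "p \<ge> 2" and "m \<ge> 2" and "local_rule p m f"
    and "\<exists>\<alpha> \<beta>. replaceable p m f \<alpha> \<beta>"
  shows "\<exists>\<alpha> \<beta>. periodic p m f \<alpha> \<beta>"
proof -
  obtain a b where R: "replaceable p m f a b"
    using assms(4) by blast
  define L where "L = left_k (m - 1) a"
  have len: "length a = length b" and long: "2 * m - 1 \<le> length a"
    and left: "left_k (m - 1) b = L"
    using R by (auto simp: replaceable_def L_def)
  have border: "m - 1 \<le> length a" "m - 1 \<le> length b"
    using long len by simp_all
  have "succ m f (a @ L) = succ m f (b @ L)"
    using R by (intro succ_append_eq) (auto simp: replaceable_def)
  moreover have "left_k (m - 1) (a @ L) = right_k (m - 1) (a @ L)"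
    and "left_k (m - 1) (b @ L) = right_k (m - 1) (b @ L)"
    using left_k_eq_right_k_append_left_k[OF border(1)] left_k_eq_right_k_append_left_k[OF border(2)] left
    unfolding L_def by simp_all
  moreover have "is_word p (a @ L)" and "is_word p (b @ L)"
    using R is_word_append_left_k unfolding L_def replaceable_def by blast+
  ultimately have "periodic p m f (a @ L) (b @ L)"
    using R long assms(2) by (auto simp: periodic_def replaceable_def)
  then show ?thesis by blast
qed

end
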